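(* Consider the algorithm OMM run on a matroid bandit $(M,P)$, and fix any episode $t\ge 1$. Let $\pi_t$ be a bijection given for the bases $A^*$ and $A^t$ (with the orderings described in the context) with the properties that $\{a^t_1,\dots,a^t_{k-1},a^*_{\pi_t(k)}\}\in\mathcal I$ for all $k$ and $\pi_t(k)=i$ whenever $a^t_k=a^*_i$. Define $\mathbb 1_{e,k}(t)=\mathbf 1[\exists i: a^t_i=e,\ \pi_t(i)=k]$. Then, with $w\sim P$ independent of $A^t$, $$\mathbb E_{w}\big[f(A^*,w)-f(A^t,w)\big]\le\sum_{e\in\bar A^*}\sum_{k=1}^{K_e}\Delta_{e,k}\,\mathbb 1_{e,k}(t).$$ Moreover, whenever $\mathbb 1_{e,k}(t)=1$ we have $U_t(e)\ge U_t(a^*_k)$; and $$\sum_{e\in\bar A^*}\sum_{k=1}^{K_e}\mathbb 1_{e,k}(t)\le K,\qquad \sum_{k=1}^{K_e}\mathbb 1_{e,k}(t)\le 1\ \text{ for every } e\in\bar A^*.$$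
   Context: A matroid $M=(E,\mathcal I)$ has ground set $E=\{1,\dots,L\}$ and rank $K$ (all bases, i.e. maximal independent sets, have cardinality $K$). For $X\in\mathcal I$ let $E(X)=\{e\in E\setminus X: X\cup\{e\}\in\mathcal I\}$. For $A\subseteq E$ and $w\in\mathbb R^L$ let $f(A,w)=\sum_{e\in A}w(e)$. A matroid bandit is a pair $(M,P)$ where $M$ is a known matroid and $P$ is an unknown probability distribution on $[0,1]^L$ (no independence between coordinates is assumed); $\bar w=\mathbb E_{w\sim P}[w]$. Weight vectors $w_0,w_1,w_2,\dots$ are drawn i.i.d. from $P$. $A^*=\{a^*_1,\dots,a^*_K\}$ is a fixed basis maximizing $f(A,\bar w)$ over $A\in\mathcal I$, indexed so that $\bar w(a^*_1)\ge\dots\ge\bar w(a^*_K)$; $\bar A^*=E\setminus A^*$ is the set of suboptimal items. For $e\in\bar A^*$ and $k\in\{1,\dots,K\}$, $\Delta_{e,k}=\bar w(a^*_k)-\bar w(e)$, and $K_e=|\{k:\Delta_{e,k}>0\}|$ (so $\Delta_{e,k}>0$ iff $k\le K_e$). Algorithm OMM (Optimistic Matroid Maximization): Initialization: observe $w_0$, set $\hat w_{e,1}=w_0(e)$ and $T_e(0)=1$ for all $e\in E$. For episodes $t=1,\dots,n$: compute $U_t(e)=\hat w_{e,T_e(t-1)}+c_{t-1,T_e(t-1)}$ for all $e$, where $c_{t,s}=\sqrt{2\log(t)/s}$ (with $c_{0,s}=0$); order the items as $e^t_1,\dots,e^t_L$ with $U_t(e^t_1)\ge\dots\ge U_t(e^t_L)$;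 start with $A^t=\emptyset$ and for $i=1,\dots,L$ add $e^t_i$ to $A^t$ if $e^t_i\in E(A^t)$. Then observe $w_t(e)$ for all $e\in A^t$ (semi-bandit feedback); set $T_e(t)=T_e(t-1)+\mathbf 1[e\in A^t]$, and for $e\in A^t$ update $\hat w_{e,T_e(t)}=\big(T_e(t-1)\hat w_{e,T_e(t-1)}+w_t(e)\big)/T_e(t)$; thus $\hat w_{e,s}$ is the average of the first $s$ observed weights of item $e$ and $T_e(t)$ is the number of observations of $e$ after episode $t$. The chosen basis is written $A^t=\{a^t_1,\dots,a^t_K\}$, where $a^t_k$ is the $k$-th item added to $A^t$ in episode $t$. *)

theory Defs
  imports "HOL-Probability.Probability"
begin

definition matroid :: "'a set \<Rightarrow> 'a set set \<Rightarrow> bool" where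
  "matroid E Ind \<longleftrightarrow> finite E \<and> (\<forall>X\<in>Ind. X \<subseteq> E) \<and> {} \<in> Ind
     \<and> (\<forall>X Y. Y \<in> Ind \<longrightarrow> X \<subseteq> Y \<longrightarrow> X \<in> Ind)
     \<and> (\<forall>X Y. X \<in> Ind \<longrightarrow> Y \<in> Ind \<longrightarrow> card X < card Y \<longrightarrow> (\<exists>e\<in>Y - X. insert e X \<in> Ind))"

definition basis :: "'a set \<Rightarrow> 'a set set \<Rightarrow> 'a set \<Rightarrow> bool" where
  "basis E Ind B \<longleftrightarrow> B \<in> Ind \<and> (\<forall>e\<in>E - B. insert e B \<notin> Ind)"

definition ext_set :: "'a set \<Rightarrow> 'a set set \<Rightarrow> 'a set \<Rightarrow> 'a set" where
  "ext_set E Ind X = {e \<in> E - X. insert e X \<in> Ind}"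

definition fw :: "'a set \<Rightarrow> ('a \<Rightarrow> real) \<Rightarrow> real" where
  "fw A w = (\<Sum>e\<in>A. w e)"

fun greedy_aux :: "'a set \<Rightarrow> 'a set set \<Rightarrow> 'a list \<Rightarrow> 'a list \<Rightarrow> 'a list" where
  "greedy_aux E Ind acc [] = acc"
| "greedy_aux E Ind acc (e # es) =
     greedy_aux E Ind (if e \<in> ext_set E Ind (set acc) then acc @ [e] else acc) es"

definition greedy :: "'a set \<Rightarrow> 'a set set \<Rightarrow> 'a list \<Rightarrow> 'a list" where
  "greedy E Ind xs = greedy_aux E Ind [] xs"

definition cconf :: "nat \<Rightarrow> nat \<Rightarrow> real" where
  "cconf t s = (if t = 0 then 0 else sqrt (2 * ln (real t) / real s))"

text \<open>State after episode t: (T_e(t), current empirical mean of e).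
  Parameters: ground set E = {1..L}, independent sets Ind, tie-breaking ordering rule
  ord (ord t U lists the items in decreasing order of U), and the realized weights ws.\<close>
fun omm_state :: "nat \<Rightarrow> nat set set \<Rightarrow> (nat \<Rightarrow> (nat \<Rightarrow> real) \<Rightarrow> nat list)
     \<Rightarrow> (nat \<Rightarrow> nat \<Rightarrow> real) \<Rightarrow> nat \<Rightarrow> (nat \<Rightarrow> nat) \<times> (nat \<Rightarrow> real)" where
  "omm_state L Ind ord ws 0 = ((\<lambda>e. 1), (\<lambda>e. ws 0 e))"
| "omm_state L Ind ord ws (Suc t) =
     (let (T, W) = omm_state L Ind ord ws t;
          U = (\<lambda>e. W e + cconf t (T e));
          A = set (greedy {1..L} Ind (ord (Suc t) U));
          T' = (\<lambda>e. T e + (if e \<in> A then 1 else 0));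
          W' = (\<lambda>e. if e \<in> A then (real (T e) * W e + ws (Suc t) e) / real (T' e) else W e)
      in (T', W'))"

definition omm_U :: "nat \<Rightarrow> nat set set \<Rightarrow> (nat \<Rightarrow> (nat \<Rightarrow> real) \<Rightarrow> nat list)
     \<Rightarrow> (nat \<Rightarrow> nat \<Rightarrow> real) \<Rightarrow> nat \<Rightarrow> nat \<Rightarrow> real" where
  "omm_U L Ind ord ws t e =
     (let (T, W) = omm_state L Ind ord ws (t - 1) in W e + cconf (t - 1) (T e))"

text \<open>The chosen basis A^t as the list [a^t_1, ..., a^t_K] in order of addition.\<close>
definition omm_A :: "nat \<Rightarrow> nat set set \<Rightarrow> (nat \<Rightarrow> (nat \<Rightarrow> real) \<Rightarrow> nat list)
     \<Rightarrow> (nat \<Rightarrow> nat \<Rightarrow> real) \<Rightarrow> nat \<Rightarrow> nat list" where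
  "omm_A L Ind ord ws t = greedy {1..L} Ind (ord t (omm_U L Ind ord ws t))"

definition valid_order :: "nat \<Rightarrow> (nat \<Rightarrow> (nat \<Rightarrow> real) \<Rightarrow> nat list) \<Rightarrow> bool" where
  "valid_order L ord \<longleftrightarrow> (\<forall>t U. set (ord t U) = {1..L} \<and> distinct (ord t U)
      \<and> sorted_wrt (\<lambda>x y. U x \<ge> U y) (ord t U))"

definition gap :: "(nat \<Rightarrow> real) \<Rightarrow> nat list \<Rightarrow> nat \<Rightarrow> nat \<Rightarrow> real" where
  "gap wbar astar e k = wbar (astar ! (k - 1)) - wbar e"

definition Kgap :: "(nat \<Rightarrow> real) \<Rightarrow> nat list \<Rightarrow> nat \<Rightarrow> nat" where
  "Kgap wbar astar e = card {k \<in> {1..length astar}. gap wbar astar e k > 0}"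

definition ind_ek :: "nat list \<Rightarrow> (nat \<Rightarrow> nat) \<Rightarrow> nat \<Rightarrow> nat \<Rightarrow> bool" where
  "ind_ek At \<pi> e k \<longleftrightarrow> (\<exists>i\<in>{1..length At}. At ! (i - 1) = e \<and> \<pi> i = k)"

end

theory Submission
  imports Defs
begin

(* By omm_A_greedy, the set A^t chosen in episode t is the greedy scan of all items in
   decreasing order of the upper confidence bounds U_t.  The proof rests on three facts:
   (1) greedy_basis: on a downward-closed family the scan of all items returns a basis,
       listed without repetitions, hence of length K;
   (2) greedy_optimistic: an item that could extend the first j choices without losing
       independence, but is not among them, has U-value at most that of choice j+1;
   (3) sum_ind_ek_positions: sums over pairs (e,k) weighted by the indicator 1_{e,k}(t)
       are sums over positions i of A^t, via the matching i |-> (a^t_i, pi_t(i)).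
   The expected regret is f(A*,wbar) - f(A^t,wbar) (integral_fw), which is the sum over
   positions i of wbar(a*_{pi(i)}) - wbar(a^t_i).  Each summand is 0 when a^t_i is optimal
   (pi fixes it), equals Delta_{a^t_i,pi(i)} when pi(i) <= K_{a^t_i}, and is non-positive
   otherwise, since positive gaps occupy an initial segment {1..K_e} (gap_pos_imp_le_Kgap);
   with (3) this is matched_regret_le_gaps.  The same reindexing bounds the number of
   active indicators by K, and distinctness of A^t leaves at most one per item.  Optimism
   is (2) for x = a*_{pi(i)}, which pi_t makes addable and fresh
   (matched_partner_optimistic). *)

section \<open>The greedy scan\<close>

lemma greedy_aux_append:
  "greedy_aux E Ind acc (ys @ zs) = greedy_aux E Ind (greedy_aux E Ind acc ys) zs"
  by (induction ys arbitrary: acc) auto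

lemma greedy_aux_extends: "\<exists>r. greedy_aux E Ind acc xs = acc @ r"
proof (induction xs arbitrary: acc)
  case (Cons a xs)
  then show ?case by auto (metis append_assoc)
qed simp

lemma greedy_aux_subset: "set (greedy_aux E Ind acc xs) \<subseteq> set acc \<union> set xs"
  by (induction xs arbitrary: acc) (auto, (fastforce split: if_splits)+)

lemma greedy_aux_distinct: "distinct acc \<Longrightarrow> distinct (greedy_aux E Ind acc xs)"
  by (induction xs arbitrary: acc) (auto simp: ext_set_def)

lemma greedy_aux_indep: "set acc \<in> Ind \<Longrightarrow> set (greedy_aux E Ind acc xs) \<in> Ind"
  by (induction xs arbitrary: acc) (auto simp: ext_set_def)

text \<open>Maximality: a scanned item that is still addable to the final output was chosen.
  This needs the family to be closed under subsets, since the output only grows.\<close>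
lemma greedy_aux_maximal:
  assumes down: "\<forall>X Y. Y \<in> Ind \<longrightarrow> X \<subseteq> Y \<longrightarrow> X \<in> Ind"
  shows "x \<in> set ys \<Longrightarrow> x \<in> E \<Longrightarrow> insert x (set (greedy_aux E Ind acc ys)) \<in> Ind
     \<Longrightarrow> x \<in> set (greedy_aux E Ind acc ys)"
proof (induction ys arbitrary: acc)
  case (Cons y ys)
  define acc' where "acc' = (if y \<in> ext_set E Ind (set acc) then acc @ [y] else acc)"
  have step: "greedy_aux E Ind acc (y # ys) = greedy_aux E Ind acc' ys"
    by (simp add: acc'_def)
  obtain r where r: "greedy_aux E Ind acc' ys = acc' @ r"
    using greedy_aux_extends by blast
  show ?case
  proof (cases "x \<in> set ys")
    case True
    then show ?thesis using Cons step by simp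
  next
    case False
    then have "x = y" using Cons.prems by simp
    show ?thesis
    proof (cases "y \<in> set acc \<or> y \<in> ext_set E Ind (set acc)")
      case True
      then show ?thesis using step r \<open>x = y\<close> by (auto simp: acc'_def)
    next
      case False
      then have "insert y (set acc) \<notin> Ind"
        using \<open>x = y\<close> Cons.prems by (auto simp: ext_set_def)
      moreover have "insert y (set acc) \<subseteq> insert x (set (greedy_aux E Ind acc (y # ys)))"
        using step r \<open>x = y\<close> by (auto simp: acc'_def)
      ultimately show ?thesis using down Cons.prems by blast
    qed
  qed
qed simp

lemma greedy_aux_split:
  assumes "distinct (ys @ e # zs)" and "e \<in> set (greedy_aux E Ind [] (ys @ e # zs))"
  shows "\<exists>r. greedy_aux E Ind [] (ys @ e # zs) = greedy_aux E Ind [] ys @ e # r"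
proof -
  let ?A = "greedy_aux E Ind [] ys"
  have scan: "greedy_aux E Ind [] (ys @ e # zs) = greedy_aux E Ind (greedy_aux E Ind ?A [e]) zs"
    by (simp add: greedy_aux_append)
  show ?thesis
  proof (cases "e \<in> ext_set E Ind (set ?A)")
    case True
    then show ?thesis using scan greedy_aux_extends[of E Ind "?A @ [e]" zs] by auto
  next
    case False
    then have "set (greedy_aux E Ind [] (ys @ e # zs)) \<subseteq> set ys \<union> set zs"
      using scan greedy_aux_subset[of E Ind ?A zs] greedy_aux_subset[of E Ind "[]" ys] by auto
    then show ?thesis using assms by auto
  qed
qed

lemma greedy_basis:
  assumes down: "\<forall>X Y. Y \<in> Ind \<longrightarrow> X \<subseteq> Y \<longrightarrow> X \<in> Ind"
    and empty: "{} \<in> Ind" and all: "set xs = E"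
  shows "basis E Ind (set (greedy_aux E Ind [] xs))"
  unfolding basis_def
proof (intro conjI ballI notI)
  show "set (greedy_aux E Ind [] xs) \<in> Ind"
    by (rule greedy_aux_indep) (simp add: empty)
  fix e
  assume "e \<in> E - set (greedy_aux E Ind [] xs)" and "insert e (set (greedy_aux E Ind [] xs)) \<in> Ind"
  then show False using greedy_aux_maximal[OF down, of e xs E] all by auto
qed

text \<open>Fact (2), optimism of the greedy choice: when the list is sorted by decreasing U, an
  item that could extend the first j choices but was not among them has U-value at most that
  of the (j+1)-st choice; otherwise it would have been scanned, and taken, before it.\<close>
lemma greedy_optimistic:
  fixes U :: "'a \<Rightarrow> 'b::linorder"
  assumes down: "\<forall>X Y. Y \<in> Ind \<longrightarrow> X \<subseteq> Y \<longrightarrow> X \<in> Ind"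
    and dist: "distinct xs" and sorted: "sorted_wrt (\<lambda>x y. U x \<ge> U y) xs"
    and sub: "set xs \<subseteq> E"
    and j: "j < length (greedy_aux E Ind [] xs)" and x: "x \<in> set xs"
    and addable: "insert x (set (take j (greedy_aux E Ind [] xs))) \<in> Ind"
    and fresh: "x \<notin> set (take j (greedy_aux E Ind [] xs))"
  shows "U x \<le> U (greedy_aux E Ind [] xs ! j)"
proof (rule ccontr)
  define G where "G = greedy_aux E Ind [] xs"
  define e where "e = G ! j"
  assume "\<not> U x \<le> U (greedy_aux E Ind [] xs ! j)"
  then have less: "U e < U x" by (simp add: e_def G_def)
  have "e \<in> set G" using j by (simp add: e_def G_def)
  then have "e \<in> set xs" using greedy_aux_subset[of E Ind "[]" xs] by (auto simp: G_def)
  then obtain ys zs where xs_split: "xs = ys @ e # zs" by (meson split_list)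
  define A where "A = greedy_aux E Ind [] ys"
  obtain r where G_split: "G = A @ e # r"
    using greedy_aux_split[of ys e zs E Ind] dist xs_split \<open>e \<in> set G\<close> by (auto simp: G_def A_def)
  have "distinct G" by (simp add: G_def greedy_aux_distinct)
  moreover have "G ! length A = e" "length A < length G" using G_split by simp_all
  ultimately have "length A = j" using j nth_eq_iff_index_eq unfolding e_def G_def by metis
  then have prefix: "take j G = A" using G_split by simp
  have "x \<notin> set zs" using less sorted xs_split by (auto simp: sorted_wrt_append)
  moreover have "x \<noteq> e" using less by auto
  ultimately have "x \<in> set ys" using x xs_split by auto
  then have "x \<in> set A"
    unfolding A_def using greedy_aux_maximal[OF down] x sub addable prefix by (auto simp: G_def A_def)
  then show False using fresh prefix by (simp add: G_def)
qed

lemma omm_A_greedy: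
  assumes "valid_order L ord"
  obtains xs where "omm_A L Ind ord ws t = greedy_aux {1..L} Ind [] xs"
    and "set xs = {1..L}" and "distinct xs"
    and "sorted_wrt (\<lambda>x y. omm_U L Ind ord ws t x \<ge> omm_U L Ind ord ws t y) xs"
  using assms unfolding valid_order_def omm_A_def greedy_def by blast

section \<open>Sums over positions of a list\<close>

text \<open>Positions are 1-based as in the paper, so the i-th entry is xs ! (i - 1).\<close>
lemma bij_betw_positions:
  assumes "distinct xs"
  shows "bij_betw (\<lambda>i. xs ! (i - 1)) {1..length xs} (set xs)"
proof (rule bij_betwI')
  fix i j assume "i \<in> {1..length xs}" "j \<in> {1..length xs}"
  then show "(xs ! (i - 1) = xs ! (j - 1)) = (i = j)"
    using assms by (auto simp: nth_eq_iff_index_eq)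
next
  fix y assume "y \<in> set xs"
  then obtain j where "j < length xs" "xs ! j = y" by (auto simp: in_set_conv_nth)
  then show "\<exists>i\<in>{1..length xs}. y = xs ! (i - 1)" by (intro bexI[of _ "Suc j"]) auto
qed auto

lemma sum_positions:
  assumes "distinct xs"
  shows "(\<Sum>i\<in>{1..length xs}. f (xs ! (i - 1))) = (\<Sum>e\<in>set xs. f e)"
  using sum.reindex_bij_betw[OF bij_betw_positions[OF assms]] .

text \<open>Fact (3): pairs (e,k) with 1_{e,k} = 1 correspond bijectively to positions i of the
  list, via i |-> (a_i, pi(i)); restricting e to X and k to {1..n e} restricts the positions.\<close>
lemma sum_ind_ek_positions:
  fixes g :: "nat \<Rightarrow> nat \<Rightarrow> 'b::comm_semiring_1"
  assumes dist: "distinct At" and pos: "\<forall>i\<in>{1..length At}. 1 \<le> \<pi> i" and fin: "finite X"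
  shows "(\<Sum>e\<in>X. \<Sum>k=1..n e. g e k * (if ind_ek At \<pi> e k then 1 else 0))
       = (\<Sum>i\<in>{i\<in>{1..length At}. At ! (i - 1) \<in> X \<and> \<pi> i \<le> n (At ! (i - 1))}.
            g (At ! (i - 1)) (\<pi> i))"
    (is "_ = (\<Sum>i\<in>?I. _)")
proof -
  let ?S = "\<lambda>e. {k\<in>{1..n e}. ind_ek At \<pi> e k}"
  have match: "bij_betw (\<lambda>i. (At ! (i - 1), \<pi> i)) ?I (Sigma X ?S)"
  proof (rule bij_betw_imageI)
    show "inj_on (\<lambda>i. (At ! (i - 1), \<pi> i)) ?I"
      using bij_betw_imp_inj_on[OF bij_betw_positions[OF dist]] by (auto simp: inj_on_def)
    show "(\<lambda>i. (At ! (i - 1), \<pi> i)) ` ?I = Sigma X ?S"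
    proof (intro equalityI subsetI)
      fix p assume "p \<in> (\<lambda>i. (At ! (i - 1), \<pi> i)) ` ?I"
      then obtain i where "i \<in> ?I" "p = (At ! (i - 1), \<pi> i)" by blast
      then show "p \<in> Sigma X ?S" using pos unfolding ind_ek_def by auto
    next
      fix p assume "p \<in> Sigma X ?S"
      then obtain i where "i \<in> {1..length At}" "p = (At ! (i - 1), \<pi> i)"
        "At ! (i - 1) \<in> X" "\<pi> i \<le> n (At ! (i - 1))"
        unfolding ind_ek_def by auto
      then show "p \<in> (\<lambda>i. (At ! (i - 1), \<pi> i)) ` ?I" by auto
    qed
  qed
  have "(\<Sum>e\<in>X. \<Sum>k=1..n e. g e k * (if ind_ek At \<pi> e k then 1 else 0))
      = (\<Sum>e\<in>X. \<Sum>k=1..n e. if ind_ek At \<pi> e k then g e k else 0)"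
    by (intro sum.cong) auto
  also have "\<dots> = (\<Sum>e\<in>X. \<Sum>k\<in>?S e. g e k)"
    by (rule sum.cong[OF refl]) (simp only: sum.inter_filter[OF finite_atLeastAtMost])
  also have "\<dots> = (\<Sum>(e, k)\<in>Sigma X ?S. g e k)"
    using fin by (simp add: sum.Sigma)
  also have "\<dots> = (\<Sum>i\<in>?I. g (At ! (i - 1)) (\<pi> i))"
    using sum.reindex_bij_betw[OF match, of "\<lambda>(e, k). g e k"] by simp
  finally show ?thesis .
qed

lemma sum_ind_ek_le_length:
  assumes "distinct At" and "\<forall>i\<in>{1..length At}. 1 \<le> \<pi> i" and "finite X"
  shows "(\<Sum>e\<in>X. \<Sum>k=1..n e. if ind_ek At \<pi> e k then 1 else 0) \<le> length At"
proof -
  have "(\<Sum>e\<in>X. \<Sum>k=1..n e. if ind_ek At \<pi> e k then 1 else 0)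
      = card {i\<in>{1..length At}. At ! (i - 1) \<in> X \<and> \<pi> i \<le> n (At ! (i - 1))}"
    using sum_ind_ek_positions[OF assms, where g = "\<lambda>_ _. 1::nat"] by simp
  also have "\<dots> \<le> card {1..length At}" by (intro card_mono) auto
  finally show ?thesis by simp
qed

text \<open>An item occupies at most one position, so at most one indicator 1_{e,k} is active.\<close>
lemma sum_ind_ek_le_1:
  assumes "distinct At"
  shows "(\<Sum>k=1..n. if ind_ek At \<pi> e k then 1 else 0) \<le> (1::nat)"
proof -
  have unique: "k = k'" if ind: "ind_ek At \<pi> e k" "ind_ek At \<pi> e k'" for k k'
  proof -
    obtain i i' where "i \<in> {1..length At}" "At ! (i - 1) = e" "\<pi> i = k"
      and "i' \<in> {1..length At}" "At ! (i' - 1) = e" "\<pi> i' = k'"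
      using ind unfolding ind_ek_def by blast
    then show ?thesis
      using inj_onD[OF bij_betw_imp_inj_on[OF bij_betw_positions[OF assms]], of i i'] by auto
  qed
  have "(\<Sum>k=1..n. if ind_ek At \<pi> e k then 1 else 0) = card {k\<in>{1..n}. ind_ek At \<pi> e k}"
    by (simp add: sum.inter_filter[symmetric])
  also have "\<dots> \<le> 1"
    using card_le_Suc0_iff_eq[of "{k\<in>{1..n}. ind_ek At \<pi> e k}"] unique by auto
  finally show ?thesis .
qed

text \<open>Since a* is sorted by decreasing mean, the gap Delta_{e,k} decreases in k; hence the
  positions with positive gap are exactly {1..K_e}.\<close>
lemma gap_pos_imp_le_Kgap:
  assumes sorted: "sorted_wrt (\<lambda>x y. wbar x \<ge> wbar y) astar"
    and k: "k \<in> {1..length astar}" and pos: "gap wbar astar e k > 0"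
  shows "k \<le> Kgap wbar astar e"
proof -
  have "{1..k} \<subseteq> {k' \<in> {1..length astar}. gap wbar astar e k' > 0}"
  proof
    fix k' assume k': "k' \<in> {1..k}"
    have "wbar (astar ! (k' - 1)) \<ge> wbar (astar ! (k - 1))"
    proof (cases "k' = k")
      case False
      then show ?thesis using sorted_wrt_nth_less[OF sorted, of "k' - 1" "k - 1"] k k' by auto
    qed simp
    then show "k' \<in> {k' \<in> {1..length astar}. gap wbar astar e k' > 0}"
      using pos k k' by (auto simp: gap_def)
  qed
  then have "card {1..k} \<le> Kgap wbar astar e"
    unfolding Kgap_def by (intro card_mono) simp_all
  then show ?thesis by simp
qed

section \<open>Matching the chosen basis with the optimal one\<close>

text \<open>The exchange bijection never pairs a position i with an optimal item already chosen at an
  earlier position j < i: pi fixes chosen optimal items and is injective.\<close>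
lemma matched_item_fresh:
  assumes inj: "inj_on \<pi> {1..K}" and len: "length At = K" and i: "i \<in> {1..K}"
    and fixed: "\<And>k. k \<in> {1..K} \<Longrightarrow> At ! (k - 1) = astar ! (\<pi> i - 1) \<Longrightarrow> \<pi> k = \<pi> i"
  shows "astar ! (\<pi> i - 1) \<notin> set (take (i - 1) At)"
proof
  assume "astar ! (\<pi> i - 1) \<in> set (take (i - 1) At)"
  then obtain j where j: "j < i - 1" "At ! j = astar ! (\<pi> i - 1)"
    using len i by (auto simp: in_set_conv_nth)
  have "Suc j \<in> {1..K}" using j i by auto
  then have "\<pi> (Suc j) = \<pi> i" using fixed[of "Suc j"] j by simp
  then have "Suc j = i" using inj_onD[OF inj] \<open>Suc j \<in> {1..K}\<close> i by blast
  then show False using j by simp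
qed

lemma matched_partner_optimistic:
  fixes U :: "'a \<Rightarrow> 'b::linorder"
  assumes down: "\<forall>X Y. Y \<in> Ind \<longrightarrow> X \<subseteq> Y \<longrightarrow> X \<in> Ind"
    and xs: "distinct xs" "sorted_wrt (\<lambda>x y. U x \<ge> U y) xs" "set xs = E"
    and At_greedy: "At = greedy_aux E Ind [] xs" and At_len: "length At = K"
    and astar_sub: "set astar \<subseteq> E" and astar_len: "length astar = K"
    and pi_bij: "bij_betw \<pi> {1..K} {1..K}"
    and pi_exch: "insert (astar ! (\<pi> i - 1)) (set (take (i - 1) At)) \<in> Ind"
    and pi_fix: "\<And>k j. k \<in> {1..K} \<Longrightarrow> j \<in> {1..K} \<Longrightarrow> At ! (k - 1) = astar ! (j - 1) \<Longrightarrow> \<pi> k = j"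
    and i: "i \<in> {1..K}"
  shows "U (astar ! (\<pi> i - 1)) \<le> U (At ! (i - 1))"
proof (rule greedy_optimistic[OF down xs(1,2) equalityD1[OF xs(3)], folded At_greedy])
  have pi_i: "\<pi> i \<in> {1..K}" using pi_bij i bij_betwE by blast
  show "i - 1 < length At" using i At_len by auto
  show "astar ! (\<pi> i - 1) \<in> set xs" using pi_i astar_len astar_sub xs(3) by auto
  show "insert (astar ! (\<pi> i - 1)) (set (take (i - 1) At)) \<in> Ind" by (fact pi_exch)
  show "astar ! (\<pi> i - 1) \<notin> set (take (i - 1) At)"
    using matched_item_fresh[OF bij_betw_imp_inj_on[OF pi_bij] At_len i] pi_fix pi_i by blast
qed

lemma matched_loss_le_gap:
  assumes sorted: "sorted_wrt (\<lambda>x y. wbar x \<ge> wbar y) astar"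
    and len: "length astar = K"
    and opt_fixed: "\<And>j. j \<in> {1..K} \<Longrightarrow> At ! (i - 1) = astar ! (j - 1) \<Longrightarrow> \<pi> i = j"
    and pi_i: "\<pi> i \<in> {1..K}"
  shows "wbar (astar ! (\<pi> i - 1)) - wbar (At ! (i - 1))
       \<le> (if At ! (i - 1) \<notin> set astar \<and> \<pi> i \<le> Kgap wbar astar (At ! (i - 1))
           then gap wbar astar (At ! (i - 1)) (\<pi> i) else 0)"
proof (cases "At ! (i - 1) \<in> set astar")
  case True
  then obtain j where "j < K" "astar ! j = At ! (i - 1)"
    using len by (auto simp: in_set_conv_nth)
  then have "\<pi> i = Suc j" using opt_fixed[of "Suc j"] by auto
  then show ?thesis using \<open>astar ! j = At ! (i - 1)\<close> True by simp
next
  case False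
  have "\<not> \<pi> i \<le> Kgap wbar astar (At ! (i - 1)) \<Longrightarrow> gap wbar astar (At ! (i - 1)) (\<pi> i) \<le> 0"
    using gap_pos_imp_le_Kgap[OF sorted, of "\<pi> i" "At ! (i - 1)"] pi_i len by (metis not_less)
  then show ?thesis using False by (auto simp: gap_def)
qed

lemma matched_regret_le_gaps:
  assumes finE: "finite E" and At_sub: "set At \<subseteq> E"
    and At_dist: "distinct At" and At_len: "length At = K"
    and astar_dist: "distinct astar" and astar_len: "length astar = K"
    and sorted: "sorted_wrt (\<lambda>x y. wbar x \<ge> wbar y) astar"
    and pi_bij: "bij_betw \<pi> {1..K} {1..K}"
    and pi_fix: "\<And>k i. k \<in> {1..K} \<Longrightarrow> i \<in> {1..K} \<Longrightarrow> At ! (k - 1) = astar ! (i - 1) \<Longrightarrow> \<pi> k = i"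
  shows "fw (set astar) wbar - fw (set At) wbar
       \<le> (\<Sum>e\<in>E - set astar. \<Sum>k=1..Kgap wbar astar e.
             gap wbar astar e k * (if ind_ek At \<pi> e k then 1 else 0))"
proof -
  have pi_in: "\<pi> i \<in> {1..K}" if "i \<in> {1..K}" for i using pi_bij that bij_betwE by blast
  then have pi_pos: "\<forall>i\<in>{1..length At}. 1 \<le> \<pi> i" using At_len by force
  define I where "I = {i\<in>{1..length At}. At ! (i - 1) \<in> E - set astar
                         \<and> \<pi> i \<le> Kgap wbar astar (At ! (i - 1))}"
  have I_sub: "I \<subseteq> {1..K}" unfolding I_def At_len by blast
  have "fw (set astar) wbar - fw (set At) wbar
      = (\<Sum>i=1..K. wbar (astar ! (\<pi> i - 1)) - wbar (At ! (i - 1)))"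
    using sum_positions[OF astar_dist, of wbar] sum_positions[OF At_dist, of wbar]
      sum.reindex_bij_betw[OF pi_bij, of "\<lambda>k. wbar (astar ! (k - 1))"]
    by (simp add: fw_def astar_len At_len sum_subtractf)
  also have "\<dots> \<le> (\<Sum>i=1..K. if i \<in> I then gap wbar astar (At ! (i - 1)) (\<pi> i) else 0)"
  proof (rule sum_mono)
    fix i assume i: "i \<in> {1..K}"
    have "i \<in> I \<longleftrightarrow> At ! (i - 1) \<notin> set astar \<and> \<pi> i \<le> Kgap wbar astar (At ! (i - 1))"
      using i At_sub At_len by (auto simp: I_def)
    then show "wbar (astar ! (\<pi> i - 1)) - wbar (At ! (i - 1))
        \<le> (if i \<in> I then gap wbar astar (At ! (i - 1)) (\<pi> i) else 0)"
      using matched_loss_le_gap[of wbar astar K At i \<pi>, OF sorted astar_len pi_fix[OF i] pi_in[OF i]]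
      by simp
  qed
  also have "\<dots> = (\<Sum>i\<in>I. gap wbar astar (At ! (i - 1)) (\<pi> i))"
    using sum.inter_restrict[OF finite_atLeastAtMost,
        of "\<lambda>i. gap wbar astar (At ! (i - 1)) (\<pi> i)" 1 K I, unfolded Int_absorb1[OF I_sub]]
    by (rule sym)
  also have "\<dots> = (\<Sum>e\<in>E - set astar. \<Sum>k=1..Kgap wbar astar e.
                 gap wbar astar e k * (if ind_ek At \<pi> e k then 1 else 0))"
    using sum_ind_ek_positions[where X = "E - set astar" and g = "gap wbar astar"
        and n = "Kgap wbar astar", OF At_dist pi_pos finite_Diff[OF finE], folded I_def]
    by (rule sym)
  finally show ?thesis .
qed

section \<open>Expected weight of a set\<close>

lemma integral_fw:
  assumes "prob_space P" and sets: "sets P = sets (Pi\<^sub>M E (\<lambda>_. borel))"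
    and bounded: "AE w in P. \<forall>e\<in>E. 0 \<le> w e \<and> w e \<le> (1::real)"
    and "A \<subseteq> E" "finite A"
  shows "integrable P (fw A)" and "(\<integral>w. fw A w \<partial>P) = fw A (\<lambda>e. \<integral>w. w e \<partial>P)"
proof -
  interpret prob_space P by fact
  have coord: "integrable P (\<lambda>w. w e)" if "e \<in> A" for e
  proof (rule integrable_const_bound[where B = 1])
    show "AE w in P. norm (w e) \<le> 1"
      using bounded by eventually_elim (use that \<open>A \<subseteq> E\<close> in auto)
    have "(\<lambda>w. w e) \<in> measurable (Pi\<^sub>M E (\<lambda>_. borel)) borel"
      using measurable_component_singleton[of e E "\<lambda>_. borel"] that \<open>A \<subseteq> E\<close> by auto
    then show "(\<lambda>w. w e) \<in> borel_measurable P"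
      using measurable_cong_sets[OF sets refl] by blast
  qed
  show "integrable P (fw A)"
    unfolding fw_def using coord by (simp add: fun_eq_iff[symmetric])
  show "(\<integral>w. fw A w \<partial>P) = fw A (\<lambda>e. \<integral>w. w e \<partial>P)"
    unfolding fw_def using coord by simp
qed

theorem theorem1:
  fixes L K t :: nat
    and Ind :: "nat set set"
    and P :: "(nat \<Rightarrow> real) measure"
    and ws :: "nat \<Rightarrow> nat \<Rightarrow> real"
    and ord :: "nat \<Rightarrow> (nat \<Rightarrow> real) \<Rightarrow> nat list"
    and astar :: "nat list"
    and \<pi> :: "nat \<Rightarrow> nat"
  defines "E \<equiv> {1..L}"
    and "wbar \<equiv> (\<lambda>e. \<integral>w. w e \<partial>P)"
    and "At \<equiv> omm_A L Ind ord ws t"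
    and "U \<equiv> omm_U L Ind ord ws t"
  assumes matroid: "matroid E Ind"
    and rank: "\<And>B. basis E Ind B \<Longrightarrow> card B = K"
    and P_prob: "prob_space P"
    and P_sets: "sets P = sets (Pi\<^sub>M E (\<lambda>_. borel))"
    and P_range: "AE w in P. \<forall>e\<in>E. 0 \<le> w e \<and> w e \<le> 1"
    and ws_range: "\<And>s e. e \<in> E \<Longrightarrow> 0 \<le> ws s e \<and> ws s e \<le> 1"
    and ord_valid: "valid_order L ord"
    and astar_len: "length astar = K"
    and astar_distinct: "distinct astar"
    and astar_basis: "basis E Ind (set astar)"
    and astar_opt: "\<And>A. A \<in> Ind \<Longrightarrow> fw A wbar \<le> fw (set astar) wbar"
    and astar_sorted: "sorted_wrt (\<lambda>x y. wbar x \<ge> wbar y) astar"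
    and t_pos: "t \<ge> 1"
    and pi_bij: "bij_betw \<pi> {1..K} {1..K}"
    and pi_exch: "\<And>k. k \<in> {1..K} \<Longrightarrow>
                    insert (astar ! (\<pi> k - 1)) (set (take (k - 1) At)) \<in> Ind"
    and pi_fix: "\<And>k i. k \<in> {1..K} \<Longrightarrow> i \<in> {1..K} \<Longrightarrow> At ! (k - 1) = astar ! (i - 1) \<Longrightarrow> \<pi> k = i"
  shows "(\<integral>w. fw (set astar) w - fw (set At) w \<partial>P)
           \<le> (\<Sum>e\<in>E - set astar. \<Sum>k=1..Kgap wbar astar e.
                 gap wbar astar e k * (if ind_ek At \<pi> e k then 1 else 0))
       \<and> (\<forall>e\<in>E - set astar. \<forall>k\<in>{1..K}. ind_ek At \<pi> e k \<longrightarrow> U e \<ge> U (astar ! (k - 1)))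
       \<and> (\<Sum>e\<in>E - set astar. \<Sum>k=1..Kgap wbar astar e. (if ind_ek At \<pi> e k then 1 else 0)) \<le> K
       \<and> (\<forall>e\<in>E - set astar. (\<Sum>k=1..Kgap wbar astar e. (if ind_ek At \<pi> e k then 1 else 0)) \<le> (1::nat))"
proof -
  have down: "\<forall>X Y. Y \<in> Ind \<longrightarrow> X \<subseteq> Y \<longrightarrow> X \<in> Ind" and indep_sub: "\<forall>X\<in>Ind. X \<subseteq> E"
    and empty: "{} \<in> Ind" and finE: "finite E"
    using matroid unfolding matroid_def by blast+
  obtain xs where At_greedy: "At = greedy_aux E Ind [] xs" and xs: "set xs = E" "distinct xs"
    "sorted_wrt (\<lambda>x y. U x \<ge> U y) xs"
    using omm_A_greedy[OF ord_valid] unfolding At_def U_def E_def by blast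
  have At_basis: "basis E Ind (set At)" and At_dist: "distinct At"
    unfolding At_greedy using greedy_basis[OF down empty xs(1)] by (simp_all add: greedy_aux_distinct)
  have At_len: "length At = K" using rank[OF At_basis] At_dist by (simp add: distinct_card)
  have At_sub: "set At \<subseteq> E" and astar_sub: "set astar \<subseteq> E"
    using At_basis astar_basis indep_sub unfolding basis_def by blast+

  have "(\<integral>w. fw (set astar) w - fw (set At) w \<partial>P) = fw (set astar) wbar - fw (set At) wbar"
    using integral_fw[OF P_prob P_sets P_range astar_sub] integral_fw[OF P_prob P_sets P_range At_sub]
    by (simp add: wbar_def)
  also have "\<dots> \<le> (\<Sum>e\<in>E - set astar. \<Sum>k=1..Kgap wbar astar e.
                 gap wbar astar e k * (if ind_ek At \<pi> e k then 1 else 0))"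
    by (rule matched_regret_le_gaps[OF finE At_sub At_dist At_len astar_distinct astar_len
          astar_sorted pi_bij pi_fix])
  finally have regret: "(\<integral>w. fw (set astar) w - fw (set At) w \<partial>P) \<le> \<dots>" .

  have optimism: "U (astar ! (\<pi> i - 1)) \<le> U (At ! (i - 1))" if "i \<in> {1..K}" for i
    using matched_partner_optimistic[OF down xs(2,3,1) At_greedy At_len astar_sub astar_len
        pi_bij pi_exch[OF that] pi_fix that] .
  have pi_pos: "\<forall>i\<in>{1..length At}. 1 \<le> \<pi> i" using pi_bij At_len bij_betwE by fastforce
  show ?thesis
    using regret optimism sum_ind_ek_le_1[OF At_dist]
      sum_ind_ek_le_length[OF At_dist pi_pos finite_Diff[OF finE]]
    by (auto simp: ind_ek_def At_len)
qed

end
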